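(* Fix a dynamic environment and suppose the agent is myopic. For any mechanism $M=(\pi,p)$ that is IC for a myopic agent, there is another mechanism $M'=(\pi',p')$ that is IC for a myopic agent (and is IR whenever $M$ is) such that (i) $u_P^{M'}(\emptyset)\ge u_P^M(\emptyset)$, and (ii) for all $h\in\mathcal H$ and $s\in\mathcal S$, $\pi'(h,s)$ and $p'(h,s)$ depend only on $|h|$, $s_p$, $a_p$ and $s$, where $(s_p,a_p)=\mathrm{last}(h)$. Moreover, this holds regardless of whether payments are allowed and of which IR constraints (none, overall, dynamic) are required.
   Context: A dynamic environment consists of a time horizon $T\in\mathbb N$, a finite state space $\mathcal S$, a finite action space $\mathcal A$, valuation functions $v^P_t,v^A_t:\mathcal S\times\mathcal A\to\mathbb R$ ($t\in[T]$) of the principal and the agent, an initial distribution $P_0\in\Delta(\mathcal S)$, and transition operators $P_t:\mathcal S\times\mathcal A\to\Delta(\mathcal S)$ with $P_t(s,a,s')$ the probability of next state $s'$ after action $a$ in state $s$ at time $t$. For $t\ge1$, $\mathcal H_t$ is the set of sequences $(s_1,a_1,\dots,s_t,a_t)$; $\mathcal H_0=\{\emptyset\}$; $\mathcal H=\bigcup_{t=0}^{T-1}\mathcal H_t$; $h+(s,a)$ appends $(s,a)$; for $h=(s_1,a_1,\dots,s_t,a_t)$, $\mathrm{last}(h)=(s_t,a_t)$, and $\mathrm{last}(\emptyset)$ is an arbitrary fixed state-action pair. A mechanism $M=(\pi,p)$ has $\pi:\mathcal H\times\mathcal S\to\Delta(\mathcal A)$ and payments $p:\mathcal H\times\mathcal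 S\to\mathbb R$ (agent to principal; $p\equiv0$ if payments are not allowed). Principal's onward utility: $u_P^M(h,s)=\sum_a\pi(h,s,a)\big(v^P_{|h|+1}(s,a)+\sum_{s'}P_{|h|+1}(s,a,s')u_P^M(h+(s,a),s')\big)+p(h,s)$ (zero when $|h|=T$), $u_P^M(\emptyset)=\sum_sP_0(s)u_P^M(\emptyset,s)$. Myopic agent's utility: $u_A^M(h,s)=\sum_a\pi(h,s,a)v^A_{|h|+1}(s,a)-p(h,s)$. A reporting strategy $r:\mathcal H\times\mathcal S\to\mathcal S$ induces for $h=(s_1,a_1,\dots,s_t,a_t)$ the reported history $r(h)=(s'_1,a_1,\dots,s'_t,a_t)$ with $s'_i=r((s_1,a_1,\dots,s_{i-1},a_{i-1}),s_i)$, and $u_A^{M,r}(h,s)=\sum_a\pi(r(h),r(h,s),a)v^A_{|h|+1}(s,a)-p(r(h),r(h,s))$. $M$ is IC for a myopic agent if for all $h\in\mathcal H,s\in\mathcal S$ and every $r$ with $r(h',s')=s'$ whenever $|h'|<|h|$, $u_A^M(h,s)\ge u_A^{M,r}(h,s)$. Overall IR: $\sum_sP_0(s)u_A^M(\emptyset,s)\ge0$; dynamic IR: $u_A^M(h,s)\ge0$ for all $h\in\mathcal H,s\in\mathcal S$. *)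

theory Defs
  imports "HOL-Probability.Probability_Mass_Function"
begin

text \<open>Histories are lists of state-action pairs in chronological order;
  h + (s,a) is h @ [(s,a)] and |h| is length h.  A mechanism is a pair
  (pol, p) with pol :: history => state => action pmf and
  p :: history => state => real.  Time indices t are 1-based as in the paper:
  the valuation / transition used at history h is indexed by length h + 1.\<close>

type_synonym ('s,'a) hist = "('s \<times> 'a) list"

definition in_H :: "nat \<Rightarrow> ('s,'a) hist \<Rightarrow> bool" where
  "in_H T h \<longleftrightarrow> length h < T"

definition last_sa :: "'s \<times> 'a \<Rightarrow> ('s,'a) hist \<Rightarrow> 's \<times> 'a" where
  "last_sa last0 h = (if h = [] then last0 else last h)"

fun uP_fuel :: "(nat \<Rightarrow> 's::finite \<Rightarrow> 'a::finite \<Rightarrow> real) \<Rightarrow> (nat \<Rightarrow> 's \<Rightarrow> 'a \<Rightarrow> 's pmf)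
    \<Rightarrow> (('s,'a) hist \<Rightarrow> 's \<Rightarrow> 'a pmf) \<Rightarrow> (('s,'a) hist \<Rightarrow> 's \<Rightarrow> real)
    \<Rightarrow> nat \<Rightarrow> ('s,'a) hist \<Rightarrow> 's \<Rightarrow> real" where
  "uP_fuel vP P pol p 0 h s = 0"
| "uP_fuel vP P pol p (Suc k) h s =
     (\<Sum>a\<in>UNIV. pmf (pol h s) a *
        (vP (length h + 1) s a +
         (\<Sum>s'\<in>UNIV. pmf (P (length h + 1) s a) s' * uP_fuel vP P pol p k (h @ [(s,a)]) s')))
     + p h s"

definition uP :: "nat \<Rightarrow> (nat \<Rightarrow> 's::finite \<Rightarrow> 'a::finite \<Rightarrow> real) \<Rightarrow> (nat \<Rightarrow> 's \<Rightarrow> 'a \<Rightarrow> 's pmf)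
    \<Rightarrow> (('s,'a) hist \<Rightarrow> 's \<Rightarrow> 'a pmf) \<Rightarrow> (('s,'a) hist \<Rightarrow> 's \<Rightarrow> real)
    \<Rightarrow> ('s,'a) hist \<Rightarrow> 's \<Rightarrow> real" where
  "uP T vP P pol p h s = uP_fuel vP P pol p (T - length h) h s"

definition uP0 :: "nat \<Rightarrow> (nat \<Rightarrow> 's::finite \<Rightarrow> 'a::finite \<Rightarrow> real) \<Rightarrow> 's pmf
    \<Rightarrow> (nat \<Rightarrow> 's \<Rightarrow> 'a \<Rightarrow> 's pmf)
    \<Rightarrow> (('s,'a) hist \<Rightarrow> 's \<Rightarrow> 'a pmf) \<Rightarrow> (('s,'a) hist \<Rightarrow> 's \<Rightarrow> real) \<Rightarrow> real" where
  "uP0 T vP P0 P pol p = (\<Sum>s\<in>UNIV. pmf P0 s * uP T vP P pol p [] s)"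

definition uA :: "(nat \<Rightarrow> 's \<Rightarrow> 'a::finite \<Rightarrow> real)
    \<Rightarrow> (('s,'a) hist \<Rightarrow> 's \<Rightarrow> 'a pmf) \<Rightarrow> (('s,'a) hist \<Rightarrow> 's \<Rightarrow> real)
    \<Rightarrow> ('s,'a) hist \<Rightarrow> 's \<Rightarrow> real" where
  "uA vA pol p h s = (\<Sum>a\<in>UNIV. pmf (pol h s) a * vA (length h + 1) s a) - p h s"

definition rep_hist :: "(('s,'a) hist \<Rightarrow> 's \<Rightarrow> 's) \<Rightarrow> ('s,'a) hist \<Rightarrow> ('s,'a) hist" where
  "rep_hist r h = map (\<lambda>i. (r (take i h) (fst (h ! i)), snd (h ! i))) [0..<length h]"

definition uA_rep :: "(nat \<Rightarrow> 's \<Rightarrow> 'a::finite \<Rightarrow> real)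
    \<Rightarrow> (('s,'a) hist \<Rightarrow> 's \<Rightarrow> 'a pmf) \<Rightarrow> (('s,'a) hist \<Rightarrow> 's \<Rightarrow> real)
    \<Rightarrow> (('s,'a) hist \<Rightarrow> 's \<Rightarrow> 's) \<Rightarrow> ('s,'a) hist \<Rightarrow> 's \<Rightarrow> real" where
  "uA_rep vA pol p r h s =
     (\<Sum>a\<in>UNIV. pmf (pol (rep_hist r h) (r h s)) a * vA (length h + 1) s a)
     - p (rep_hist r h) (r h s)"

definition IC_myopic :: "nat \<Rightarrow> (nat \<Rightarrow> 's \<Rightarrow> 'a::finite \<Rightarrow> real)
    \<Rightarrow> (('s,'a) hist \<Rightarrow> 's \<Rightarrow> 'a pmf) \<Rightarrow> (('s,'a) hist \<Rightarrow> 's \<Rightarrow> real) \<Rightarrow> bool" where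
  "IC_myopic T vA pol p \<longleftrightarrow>
     (\<forall>h s r. in_H T h \<longrightarrow>
        (\<forall>h' s'. length h' < length h \<longrightarrow> r h' s' = s') \<longrightarrow>
        uA vA pol p h s \<ge> uA_rep vA pol p r h s)"

definition overall_IR :: "(nat \<Rightarrow> 's::finite \<Rightarrow> 'a::finite \<Rightarrow> real) \<Rightarrow> 's pmf
    \<Rightarrow> (('s,'a) hist \<Rightarrow> 's \<Rightarrow> 'a pmf) \<Rightarrow> (('s,'a) hist \<Rightarrow> 's \<Rightarrow> real) \<Rightarrow> bool" where
  "overall_IR vA P0 pol p \<longleftrightarrow> (\<Sum>s\<in>UNIV. pmf P0 s * uA vA pol p [] s) \<ge> 0"

definition dynamic_IR :: "nat \<Rightarrow> (nat \<Rightarrow> 's \<Rightarrow> 'a::finite \<Rightarrow> real)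
    \<Rightarrow> (('s,'a) hist \<Rightarrow> 's \<Rightarrow> 'a pmf) \<Rightarrow> (('s,'a) hist \<Rightarrow> 's \<Rightarrow> real) \<Rightarrow> bool" where
  "dynamic_IR T vA pol p \<longleftrightarrow> (\<forall>h s. in_H T h \<longrightarrow> uA vA pol p h s \<ge> 0)"

datatype ir_mode = NoIR | OverallIR | DynamicIR

definition IR_ok :: "ir_mode \<Rightarrow> nat \<Rightarrow> (nat \<Rightarrow> 's::finite \<Rightarrow> 'a::finite \<Rightarrow> real) \<Rightarrow> 's pmf
    \<Rightarrow> (('s,'a) hist \<Rightarrow> 's \<Rightarrow> 'a pmf) \<Rightarrow> (('s,'a) hist \<Rightarrow> 's \<Rightarrow> real) \<Rightarrow> bool" where
  "IR_ok m T vA P0 pol p = (case m of NoIR \<Rightarrow> True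
       | OverallIR \<Rightarrow> overall_IR vA P0 pol p
       | DynamicIR \<Rightarrow> dynamic_IR T vA pol p)"

definition pay_ok :: "bool \<Rightarrow> nat \<Rightarrow> (('s,'a) hist \<Rightarrow> 's \<Rightarrow> real) \<Rightarrow> bool" where
  "pay_ok allow T p \<longleftrightarrow> (\<not> allow \<longrightarrow> (\<forall>h s. in_H T h \<longrightarrow> p h s = 0))"

end

theory Submission
  imports Defs
begin

text \<open>Histories of the same length ending in the same state-action pair face the same
  distribution of the current state and of the whole future.  By backward induction one can
  therefore pick, for every time t and last pair l, a single representative history whose
  continuation gives the principal the largest expected onward utility within its class, and
  run the original mechanism at every history as if the representative had occurred.  The
  agent is myopic and the representative has the same length, so at each history the new
  mechanism offers exactly the menu the old one offered at the representative: IC, IR and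
  the absence of payments carry over.\<close>

lemma arg_max_on_if_finite:
  fixes f :: "'a \<Rightarrow> 'b::linorder"
  assumes "finite S" "S \<noteq> {}"
  shows "arg_max_on f S \<in> S" and "\<And>y. y \<in> S \<Longrightarrow> f y \<le> f (arg_max_on f S)"
proof -
  obtain x where x: "x \<in> S" "f x = Max (f ` S)"
    using Max_in[of "f ` S"] assms by (metis empty_is_image finite_imageI imageE)
  have max: "\<And>y. y \<in> S \<Longrightarrow> f y \<le> f x"
    using x assms by simp
  have "arg_max_on f S \<in> S \<and> (\<forall>y\<in>S. f y \<le> f (arg_max_on f S))"
    unfolding arg_max_on_def
    by (rule arg_maxI[where x = x]) (use x max in \<open>auto simp: not_less\<close>)
  then show "arg_max_on f S \<in> S" and "\<And>y. y \<in> S \<Longrightarrow> f y \<le> f (arg_max_on f S)"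
    by auto
qed

lemma rep_hist_truthful:
  assumes "\<forall>h' s'. length h' < length h \<longrightarrow> r h' s' = s'"
  shows "rep_hist r h = h"
proof -
  have "rep_hist r h = map (\<lambda>i. h ! i) [0..<length h]"
    unfolding rep_hist_def using assms by (intro map_cong) auto
  also have "\<dots> = h"
    by (rule map_nth)
  finally show ?thesis .
qed

lemma uA_reindex:
  assumes "length (\<sigma> h) = length h"
  shows "uA vA (\<lambda>h. pol (\<sigma> h)) (\<lambda>h. p (\<sigma> h)) h s = uA vA pol p (\<sigma> h) s"
  using assms by (simp add: uA_def)

lemma IC_myopic_reindex:
  fixes \<sigma> :: "('s, 'a::finite) hist \<Rightarrow> ('s, 'a) hist"
  assumes IC: "IC_myopic T vA pol p" and len: "\<And>h. length (\<sigma> h) = length h"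
  shows "IC_myopic T vA (\<lambda>h. pol (\<sigma> h)) (\<lambda>h. p (\<sigma> h))"
  unfolding IC_myopic_def
proof (intro allI impI)
  fix h :: "('s, 'a) hist" and s :: 's and r :: "('s, 'a) hist \<Rightarrow> 's \<Rightarrow> 's"
  assume "in_H T h" and truthful: "\<forall>h' s'. length h' < length h \<longrightarrow> r h' s' = s'"
  \<comment> \<open>The same misreport, made at the representative history under the original mechanism.\<close>
  define r' where "r' h' s' = (if h' = \<sigma> h then r h s else s')" for h' s'
  have truthful': "\<forall>h' s'. length h' < length (\<sigma> h) \<longrightarrow> r' h' s' = s'"
    by (auto simp: r'_def)
  have "uA_rep vA (\<lambda>h. pol (\<sigma> h)) (\<lambda>h. p (\<sigma> h)) r h s = uA_rep vA pol p r' (\<sigma> h) s"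
    unfolding uA_rep_def rep_hist_truthful[OF truthful] rep_hist_truthful[OF truthful']
    by (simp add: r'_def len)
  also have "\<dots> \<le> uA vA pol p (\<sigma> h) s"
    using IC truthful' \<open>in_H T h\<close> len[of h] unfolding IC_myopic_def in_H_def by simp
  also have "\<dots> = uA vA (\<lambda>h. pol (\<sigma> h)) (\<lambda>h. p (\<sigma> h)) h s"
    by (simp add: uA_reindex len)
  finally show "uA_rep vA (\<lambda>h. pol (\<sigma> h)) (\<lambda>h. p (\<sigma> h)) r h s
      \<le> uA vA (\<lambda>h. pol (\<sigma> h)) (\<lambda>h. p (\<sigma> h)) h s" .
qed

lemma IR_ok_reindex:
  assumes IR: "IR_ok ir T vA P0 pol p" and len: "\<And>h. length (\<sigma> h) = length h"
  shows "IR_ok ir T vA P0 (\<lambda>h. pol (\<sigma> h)) (\<lambda>h. p (\<sigma> h))"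
proof (cases ir)
  case NoIR
  then show ?thesis by (simp add: IR_ok_def)
next
  case OverallIR
  have "\<sigma> [] = []"
    using len[of "[]"] by simp
  then show ?thesis
    using IR OverallIR by (simp add: IR_ok_def overall_IR_def uA_reindex)
next
  case DynamicIR
  then show ?thesis
    using IR len by (simp add: IR_ok_def dynamic_IR_def in_H_def uA_reindex)
qed

lemma pay_ok_reindex:
  assumes "pay_ok allow T p" and "\<And>h. length (\<sigma> h) = length h"
  shows "pay_ok allow T (\<lambda>h. p (\<sigma> h))"
  using assms by (simp add: pay_ok_def in_H_def)

definition stage_value :: "(nat \<Rightarrow> 's::finite \<Rightarrow> 'a::finite \<Rightarrow> real) \<Rightarrow> (nat \<Rightarrow> 's \<Rightarrow> 'a \<Rightarrow> 's pmf)
    \<Rightarrow> (('s,'a) hist \<Rightarrow> 's \<Rightarrow> 'a pmf) \<Rightarrow> (('s,'a) hist \<Rightarrow> 's \<Rightarrow> real)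
    \<Rightarrow> nat \<Rightarrow> ('s \<times> 'a \<Rightarrow> 's \<Rightarrow> real) \<Rightarrow> ('s,'a) hist \<Rightarrow> 's \<Rightarrow> real" where
  "stage_value vP P pol p t W h s =
     (\<Sum>a\<in>UNIV. pmf (pol h s) a *
        (vP t s a + (\<Sum>s'\<in>UNIV. pmf (P t s a) s' * W (s,a) s'))) + p h s"

lemma uP_fuel_Suc_stage_value:
  "uP_fuel vP P pol p (Suc k) h s =
     stage_value vP P pol p (Suc (length h)) (\<lambda>sa. uP_fuel vP P pol p k (h @ [sa])) h s"
  by (simp add: stage_value_def)

definition histories_ending :: "'s \<times> 'a \<Rightarrow> nat \<Rightarrow> 's \<times> 'a \<Rightarrow> ('s,'a) hist set" where
  "histories_ending last0 t l = {h. length h = t \<and> last_sa last0 h = l}"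

lemma finite_histories_ending:
  "finite (histories_ending last0 t (l :: 's::finite \<times> 'a::finite))"
  by (rule finite_subset[OF _ finite_list_length[of t]]) (auto simp: histories_ending_def)

lemma mem_histories_ending: "h \<in> histories_ending last0 (length h) (last_sa last0 h)"
  by (simp add: histories_ending_def)

locale markov_reduction =
  fixes vP :: "nat \<Rightarrow> 's::finite \<Rightarrow> 'a::finite \<Rightarrow> real"
    and P0 :: "'s pmf"
    and P :: "nat \<Rightarrow> 's \<Rightarrow> 'a \<Rightarrow> 's pmf"
    and pol :: "('s,'a) hist \<Rightarrow> 's \<Rightarrow> 'a pmf"
    and p :: "('s,'a) hist \<Rightarrow> 's \<Rightarrow> real"
    and last0 :: "'s \<times> 'a"
begin

definition state_dist :: "nat \<Rightarrow> 's \<times> 'a \<Rightarrow> 's pmf" where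
  "state_dist t l = (if t = 0 then P0 else P t (fst l) (snd l))"

definition best_history :: "('s \<times> 'a \<Rightarrow> 's \<Rightarrow> real) \<Rightarrow> nat \<Rightarrow> 's \<times> 'a \<Rightarrow> ('s,'a) hist" where
  "best_history W t l = arg_max_on
     (\<lambda>h. \<Sum>s\<in>UNIV. pmf (state_dist t l) s * stage_value vP P pol p (Suc t) W h s)
     (histories_ending last0 t l)"

fun opt_value :: "nat \<Rightarrow> nat \<Rightarrow> 's \<times> 'a \<Rightarrow> 's \<Rightarrow> real" where
  "opt_value 0 t l s = 0"
| "opt_value (Suc k) t l s =
     stage_value vP P pol p (Suc t) (opt_value k (Suc t)) (best_history (opt_value k (Suc t)) t l) s"

lemma best_history_mem:
  assumes "h \<in> histories_ending last0 t l"
  shows "best_history W t l \<in> histories_ending last0 t l"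
  unfolding best_history_def using assms finite_histories_ending
  by (blast intro: arg_max_on_if_finite(1))

lemma best_history_ge:
  assumes "h \<in> histories_ending last0 t l"
  shows "(\<Sum>s\<in>UNIV. pmf (state_dist t l) s * stage_value vP P pol p (Suc t) W h s)
    \<le> (\<Sum>s\<in>UNIV. pmf (state_dist t l) s * stage_value vP P pol p (Suc t) W (best_history W t l) s)"
  unfolding best_history_def
  by (rule arg_max_on_if_finite(2)[OF finite_histories_ending _ assms]) (use assms in auto)

lemma expected_uP_fuel_le_opt_value:
  "(\<Sum>s\<in>UNIV. pmf (state_dist (length h) (last_sa last0 h)) s * uP_fuel vP P pol p k h s)
    \<le> (\<Sum>s\<in>UNIV. pmf (state_dist (length h) (last_sa last0 h)) s * opt_value k (length h) (last_sa last0 h) s)"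
proof (induction k arbitrary: h)
  case 0
  show ?case by simp
next
  case (Suc k)
  let ?t = "length h" and ?l = "last_sa last0 h"
  let ?W = "opt_value k (Suc ?t)"
  let ?E = "\<lambda>f. \<Sum>s\<in>UNIV. pmf (state_dist ?t ?l) s * f s"
  have continuation: "(\<Sum>s'\<in>UNIV. pmf (P (Suc ?t) s a) s' * uP_fuel vP P pol p k (h @ [(s,a)]) s')
      \<le> (\<Sum>s'\<in>UNIV. pmf (P (Suc ?t) s a) s' * ?W (s,a) s')" for s a
    using Suc.IH[of "h @ [(s,a)]"] by (simp add: state_dist_def last_sa_def)
  have "?E (uP_fuel vP P pol p (Suc k) h) \<le> ?E (stage_value vP P pol p (Suc ?t) ?W h)"
    unfolding uP_fuel_Suc_stage_value stage_value_def
    by (intro sum_mono mult_left_mono add_right_mono add_left_mono continuation) auto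
  also have "\<dots> \<le> ?E (stage_value vP P pol p (Suc ?t) ?W (best_history ?W ?t ?l))"
    by (rule best_history_ge[OF mem_histories_ending])
  also have "\<dots> = ?E (opt_value (Suc k) ?t ?l)"
    by simp
  finally show ?case .
qed

definition optimal_plan :: "nat \<Rightarrow> nat \<Rightarrow> 's \<times> 'a \<Rightarrow> ('s,'a) hist" where
  "optimal_plan T t l = best_history (opt_value (T - Suc t) (Suc t)) t l"

definition compress :: "nat \<Rightarrow> ('s,'a) hist \<Rightarrow> ('s,'a) hist" where
  "compress T h = optimal_plan T (length h) (last_sa last0 h)"

lemma length_compress: "length (compress T h) = length h"
  using best_history_mem[OF mem_histories_ending[of h]]
  by (simp add: compress_def optimal_plan_def histories_ending_def)

lemma uP_fuel_compress:
  assumes "length h + k = T"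
  shows "uP_fuel vP P (\<lambda>h. pol (compress T h)) (\<lambda>h. p (compress T h)) k h s
    = opt_value k (length h) (last_sa last0 h) s"
  using assms
proof (induction k arbitrary: h s)
  case 0
  show ?case by simp
next
  case (Suc k)
  have "T - Suc (length h) = k"
    using Suc.prems by simp
  moreover have "uP_fuel vP P (\<lambda>h. pol (compress T h)) (\<lambda>h. p (compress T h)) k (h @ [sa])
      = opt_value k (Suc (length h)) sa" for sa
    using Suc.IH[of "h @ [sa]"] Suc.prems by (auto simp: last_sa_def)
  ultimately show ?case
    by (simp add: uP_fuel_Suc_stage_value stage_value_def compress_def optimal_plan_def)
qed

lemma uP0_le_uP0_compress:
  "uP0 T vP P0 P pol p \<le> uP0 T vP P0 P (\<lambda>h. pol (compress T h)) (\<lambda>h. p (compress T h))"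
  using expected_uP_fuel_le_opt_value[of "[]" T] uP_fuel_compress[of "[]" T T]
  by (simp add: uP0_def uP_def state_dist_def)

end

theorem lemma6:
  fixes T :: nat
    and vP vA :: "nat \<Rightarrow> 's::finite \<Rightarrow> 'a::finite \<Rightarrow> real"
    and P0 :: "'s pmf"
    and P :: "nat \<Rightarrow> 's \<Rightarrow> 'a \<Rightarrow> 's pmf"
    and last0 :: "'s \<times> 'a"
    and allow_pay :: bool
    and ir :: ir_mode
    and pol :: "('s,'a) hist \<Rightarrow> 's \<Rightarrow> 'a pmf"
    and p :: "('s,'a) hist \<Rightarrow> 's \<Rightarrow> real"
  assumes "IC_myopic T vA pol p"
    and "IR_ok ir T vA P0 pol p"
    and "pay_ok allow_pay T p"
  shows "\<exists>(pol' :: ('s,'a) hist \<Rightarrow> 's \<Rightarrow> 'a pmf) (p' :: ('s,'a) hist \<Rightarrow> 's \<Rightarrow> real).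
           IC_myopic T vA pol' p' \<and> IR_ok ir T vA P0 pol' p' \<and> pay_ok allow_pay T p' \<and>
           uP0 T vP P0 P pol' p' \<ge> uP0 T vP P0 P pol p \<and>
           (\<exists>f g. \<forall>h s. in_H T h \<longrightarrow>
               pol' h s = f (length h) (last_sa last0 h) s \<and>
               p' h s = g (length h) (last_sa last0 h) s)"
proof -
  interpret markov_reduction vP P0 P pol p last0 .
  let ?pol' = "\<lambda>h. pol (compress T h)" and ?p' = "\<lambda>h. p (compress T h)"
  have "\<exists>f g. \<forall>h s. in_H T h \<longrightarrow>
      ?pol' h s = f (length h) (last_sa last0 h) s \<and> ?p' h s = g (length h) (last_sa last0 h) s"
    by (intro exI[of _ "\<lambda>t l. pol (optimal_plan T t l)"] exI[of _ "\<lambda>t l. p (optimal_plan T t l)"])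
      (simp add: compress_def)
  then show ?thesis
    using IC_myopic_reindex[OF assms(1) length_compress[of T]]
      IR_ok_reindex[OF assms(2) length_compress[of T]]
      pay_ok_reindex[OF assms(3) length_compress[of T]] uP0_le_uP0_compress[of T]
    by (intro exI[of _ ?pol'] exI[of _ ?p']) blast
qed

end
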